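(* Let $I$ be a resident-minimal instance and $(P,X)$ a (general) prescription for $I$. Then there is a resident-changeless and hospital-complete extension $I'$ of $I$ such that $(P,Y)$, where $Y=X\setminus\mathrm{rej}(I')$, is a prescription for $I'$.
   Context: An instance $I$ consists of finite disjoint sets $R$ (residents) and $H$ (hospitals), a positive integer quota $q_h$ for each $h\in H$, for each $r\in R$ a preference list of $r$ (a sequence of distinct members of $H$, not necessarily all), and for each $h\in H$ a preference list of $h$ (a sequence of distinct members of $R$). A list is complete if it contains every member of the opposite side; an instance is hospital-complete if every hospital's list is complete. A match is a pair $(r,h)\in R\times H$. For a set $M$ of matches, $\mathrm{res}_h M=\{r:(r,h)\in M\}$, $\mathrm{res}\,M=\{r:(r,h)\in M\text{ for some }h\}$. $J$ is an extension of $I$ (same $R,H$, quotas) if every list of $J$ has the corresponding list of $I$ as a prefix; it is resident-changeless if every resident's list is the same in $I$ and $J$. An event is $(r,h)^+$ (proposal) or $(r,h)^-$ (rejection). For an event sequence $\sigma$, $\mathrm{prop}(\sigma)$, $\mathrm{rej}(\sigma)$ are the sets of matches proposed/rejected in $\sigma$, $\mathrm{tent}(\sigma)=\mathrm{prop}(\sigma)\setminus\mathrm{rej}(\sigma)$, and $\mathrm{pend}_I(\sigma)$ is the set of $(r,h)\in\mathrm{tent}(\sigma)$ with $r$ not on the list of $h$ in $I$. A match $(r,h)\in M$ is ousted from $M$ in $I$ if the list of $h$ in $I$ contains at least $q_h$ residents of $\mathrm{res}_h M$ and either $r$ is not on it or $r$ is preceded on it by at least $q_h$ residents of $\mathrm{res}_h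 M$. $I$-feasible sequences: the empty sequence is $I$-feasible; if $\sigma$ is $I$-feasible then $\sigma+(r,h)^+$ is $I$-feasible if $r\notin\mathrm{res}\,\mathrm{tent}(\sigma)$, $(r,h)\notin\mathrm{prop}(\sigma)$, $h$ is on the list of $r$ in $I$ and $(r,h')\in\mathrm{rej}(\sigma)$ for every $h'$ preceding $h$ on it; and $\sigma+(r,h)^-$ is $I$-feasible if $(r,h)$ is ousted from $\mathrm{prop}(\sigma)$ in $I$ and $(r,h)\notin\mathrm{rej}(\sigma)$. All maximal $I$-feasible sequences contain the same events; $\mathrm{prop}(I),\mathrm{rej}(I),\mathrm{tent}(I),\mathrm{pend}(I)$ denote $\mathrm{prop}(\sigma),\mathrm{rej}(\sigma),\mathrm{tent}(\sigma),\mathrm{pend}_I(\sigma)$ for any maximal $I$-feasible $\sigma$. $I$ is resident-minimal if $\mathrm{prop}(I)$ equals the set of matches $(r,h)$ with $h$ on the list of $r$ in $I$. For a resident-minimal instance $I$, a (general) prescription for $I$ is a pair $(P,X)$ of sets of matches such that: (P1) $P\cap\mathrm{prop}(I)=\emptyset$; (P2) for each $r\in R$ there is at most one $h$ with $(r,h)\in P$; (P3) $X\subseteq\mathrm{tent}(I)$; (P4) $\mathrm{res}\,P\cap\mathrm{res}\,\mathrm{tent}(I)\subseteq\mathrm{res}\,X$; (P5) for each $h$, $|\mathrm{res}_h(P\cup(\mathrm{tent}(I)\setminus X))|\le q_h$, with equality if $\mathrm{res}_h X\ne\emptyset$; (P6') for each $h$, every member of $\mathrm{res}_h(P\cup((\mathrm{tent}(I)\setminus\mathrm{pend}(I))\setminus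 X))$ precedes all members of $\mathrm{res}_h(X\setminus\mathrm{pend}(I))$ in the list of $h$ in $I$, and if $\mathrm{res}_h(X\setminus\mathrm{pend}(I))\ne\emptyset$ then $\mathrm{res}_h\,\mathrm{pend}(I)\subseteq\mathrm{res}_h X$. When $I$ is hospital-complete (so $\mathrm{pend}(I)=\emptyset$), a prescription for $I$ is such a pair with (P6') read as (P6): every member of $\mathrm{res}_h(P\cup(\mathrm{tent}(I)\setminus X))$ precedes all members of $\mathrm{res}_h X$ in the list of $h$ in $I$. *)

theory Defs
  imports Main "HOL-Library.Sublist"
begin

text \<open>Residents have type 'r, hospitals type 'h (so R and H are disjoint).
  A match is a pair (r,h).\<close>

record ('r, 'h) inst =
  Rs :: "'r set"
  Hs :: "'h set"
  quota :: "'h \<Rightarrow> nat"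
  rpref :: "'r \<Rightarrow> 'h list"
  hpref :: "'h \<Rightarrow> 'r list"

definition valid_inst :: "('r, 'h) inst \<Rightarrow> bool" where
  "valid_inst I \<longleftrightarrow> finite (Rs I) \<and> finite (Hs I)
     \<and> (\<forall>h\<in>Hs I. quota I h > 0)
     \<and> (\<forall>r\<in>Rs I. distinct (rpref I r) \<and> set (rpref I r) \<subseteq> Hs I)
     \<and> (\<forall>h\<in>Hs I. distinct (hpref I h) \<and> set (hpref I h) \<subseteq> Rs I)
     \<and> (\<forall>r. r \<notin> Rs I \<longrightarrow> rpref I r = [])
     \<and> (\<forall>h. h \<notin> Hs I \<longrightarrow> hpref I h = [])"

definition precedes :: "'a list \<Rightarrow> 'a \<Rightarrow> 'a \<Rightarrow> bool" where
  "precedes xs a b \<longleftrightarrow> (\<exists>i j. i < j \<and> j < length xs \<and> xs ! i = a \<and> xs ! j = b)"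

definition res_h :: "'h \<Rightarrow> ('r \<times> 'h) set \<Rightarrow> 'r set" where
  "res_h h M = {r. (r, h) \<in> M}"

definition res :: "('r \<times> 'h) set \<Rightarrow> 'r set" where
  "res M = {r. \<exists>h. (r, h) \<in> M}"

datatype ('r, 'h) event = Prop 'r 'h | Rej 'r 'h

definition props :: "('r, 'h) event list \<Rightarrow> ('r \<times> 'h) set" where
  "props \<sigma> = {(r, h). Prop r h \<in> set \<sigma>}"

definition rejs :: "('r, 'h) event list \<Rightarrow> ('r \<times> 'h) set" where
  "rejs \<sigma> = {(r, h). Rej r h \<in> set \<sigma>}"

definition tents :: "('r, 'h) event list \<Rightarrow> ('r \<times> 'h) set" where
  "tents \<sigma> = props \<sigma> - rejs \<sigma>"

definition pends :: "('r, 'h) inst \<Rightarrow> ('r, 'h) event list \<Rightarrow> ('r \<times> 'h) set" where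
  "pends I \<sigma> = {(r, h) \<in> tents \<sigma>. r \<notin> set (hpref I h)}"

definition ousted :: "('r, 'h) inst \<Rightarrow> ('r \<times> 'h) \<Rightarrow> ('r \<times> 'h) set \<Rightarrow> bool" where
  "ousted I m M \<longleftrightarrow> (case m of (r, h) \<Rightarrow>
     m \<in> M
     \<and> card (set (hpref I h) \<inter> res_h h M) \<ge> quota I h
     \<and> (r \<notin> set (hpref I h)
        \<or> card {r' \<in> res_h h M. precedes (hpref I h) r' r} \<ge> quota I h))"

inductive feasible :: "('r, 'h) inst \<Rightarrow> ('r, 'h) event list \<Rightarrow> bool" for I where
  feas_Nil: "feasible I []"
| feas_Prop: "\<lbrakk> feasible I \<sigma>; r \<notin> res (tents \<sigma>); (r, h) \<notin> props \<sigma>;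
     h \<in> set (rpref I r);
     \<forall>h'. precedes (rpref I r) h' h \<longrightarrow> (r, h') \<in> rejs \<sigma> \<rbrakk>
   \<Longrightarrow> feasible I (\<sigma> @ [Prop r h])"
| feas_Rej: "\<lbrakk> feasible I \<sigma>; ousted I (r, h) (props \<sigma>); (r, h) \<notin> rejs \<sigma> \<rbrakk>
   \<Longrightarrow> feasible I (\<sigma> @ [Rej r h])"

definition maximal_feasible :: "('r, 'h) inst \<Rightarrow> ('r, 'h) event list \<Rightarrow> bool" where
  "maximal_feasible I \<sigma> \<longleftrightarrow> feasible I \<sigma> \<and> \<not> (\<exists>e. feasible I (\<sigma> @ [e]))"

text \<open>prop(I), rej(I), tent(I), pend(I): evaluated at (any) maximal I-feasible sequence.\<close>
definition some_max :: "('r, 'h) inst \<Rightarrow> ('r, 'h) event list" where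
  "some_max I = (SOME \<sigma>. maximal_feasible I \<sigma>)"

definition propI :: "('r, 'h) inst \<Rightarrow> ('r \<times> 'h) set" where
  "propI I = props (some_max I)"

definition rejI :: "('r, 'h) inst \<Rightarrow> ('r \<times> 'h) set" where
  "rejI I = rejs (some_max I)"

definition tentI :: "('r, 'h) inst \<Rightarrow> ('r \<times> 'h) set" where
  "tentI I = tents (some_max I)"

definition pendI :: "('r, 'h) inst \<Rightarrow> ('r \<times> 'h) set" where
  "pendI I = pends I (some_max I)"

definition resident_minimal :: "('r, 'h) inst \<Rightarrow> bool" where
  "resident_minimal I \<longleftrightarrow> propI I = {(r, h). h \<in> set (rpref I r)}"

definition hospital_complete :: "('r, 'h) inst \<Rightarrow> bool" where
  "hospital_complete I \<longleftrightarrow> (\<forall>h\<in>Hs I. set (hpref I h) = Rs I)"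

definition extension :: "('r, 'h) inst \<Rightarrow> ('r, 'h) inst \<Rightarrow> bool" where
  "extension I J \<longleftrightarrow> Rs J = Rs I \<and> Hs J = Hs I
     \<and> (\<forall>h\<in>Hs I. quota J h = quota I h)
     \<and> (\<forall>r\<in>Rs I. prefix (rpref I r) (rpref J r))
     \<and> (\<forall>h\<in>Hs I. prefix (hpref I h) (hpref J h))"

definition resident_changeless :: "('r, 'h) inst \<Rightarrow> ('r, 'h) inst \<Rightarrow> bool" where
  "resident_changeless I J \<longleftrightarrow> (\<forall>r\<in>Rs I. rpref J r = rpref I r)"

text \<open>Conditions (P1)-(P5), shared by both notions of prescription.\<close>
definition presc_base :: "('r, 'h) inst \<Rightarrow> ('r \<times> 'h) set \<Rightarrow> ('r \<times> 'h) set \<Rightarrow> bool" where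
  "presc_base I P X \<longleftrightarrow>
     P \<subseteq> Rs I \<times> Hs I \<and> X \<subseteq> Rs I \<times> Hs I
   \<and> P \<inter> propI I = {}
   \<and> (\<forall>r h h'. (r, h) \<in> P \<longrightarrow> (r, h') \<in> P \<longrightarrow> h = h')
   \<and> X \<subseteq> tentI I
   \<and> res P \<inter> res (tentI I) \<subseteq> res X
   \<and> (\<forall>h\<in>Hs I. card (res_h h (P \<union> (tentI I - X))) \<le> quota I h
        \<and> (res_h h X \<noteq> {} \<longrightarrow> card (res_h h (P \<union> (tentI I - X))) = quota I h))"

definition gen_prescription :: "('r, 'h) inst \<Rightarrow> ('r \<times> 'h) set \<Rightarrow> ('r \<times> 'h) set \<Rightarrow> bool" where
  "gen_prescription I P X \<longleftrightarrow> resident_minimal I \<and> presc_base I P X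
   \<and> (\<forall>h\<in>Hs I.
        (\<forall>a\<in>res_h h (P \<union> ((tentI I - pendI I) - X)). \<forall>b\<in>res_h h (X - pendI I).
            precedes (hpref I h) a b)
      \<and> (res_h h (X - pendI I) \<noteq> {} \<longrightarrow> res_h h (pendI I) \<subseteq> res_h h X))"

text \<open>Prescription for a hospital-complete resident-minimal instance (with (P6)).\<close>
definition prescription :: "('r, 'h) inst \<Rightarrow> ('r \<times> 'h) set \<Rightarrow> ('r \<times> 'h) set \<Rightarrow> bool" where
  "prescription I P X \<longleftrightarrow> resident_minimal I \<and> hospital_complete I \<and> presc_base I P X
   \<and> (\<forall>h\<in>Hs I. \<forall>a\<in>res_h h (P \<union> (tentI I - X)). \<forall>b\<in>res_h h X.
        precedes (hpref I h) a b)"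

end

theory Submission
  imports Defs
begin

text \<open>Complete the list of every hospital h by appending, first, the residents that the
  prescription assigns to h (those of P and of the retained tentative matches tent(I) - X) that
  are not yet on the list, and then all remaining residents. Feasible event sequences of I stay
  feasible in this completion, so it is again resident-minimal and rejects at least the matches
  rejected in I. The appended order makes every assigned resident precede every resident of X,
  which yields (P6). If X meets h, the assigned residents fill the quota of h exactly, so none of
  them can be ousted by others; hence no retained tentative match is rejected in the completion,
  which yields (P5).\<close>

section \<open>Precedence in lists\<close>

lemma precedes_set: "precedes xs a b \<Longrightarrow> a \<in> set xs \<and> b \<in> set xs"
  unfolding precedes_def by auto

lemma finite_predecessors: "finite {x \<in> S. precedes xs x y}"
  by (rule finite_subset[of _ "set xs"]) (auto dest: precedes_set)

lemma precedes_append_left: "precedes xs a b \<Longrightarrow> precedes (xs @ ys) a b"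
  unfolding precedes_def by (metis length_append nth_append trans_less_add1 order.strict_trans)

lemma precedes_append_across: "a \<in> set xs \<Longrightarrow> b \<in> set ys \<Longrightarrow> precedes (xs @ ys) a b"
proof -
  assume "a \<in> set xs" "b \<in> set ys"
  then obtain i j where "i < length xs" "xs ! i = a" "j < length ys" "ys ! j = b"
    by (auto simp: in_set_conv_nth)
  then show ?thesis
    unfolding precedes_def by (intro exI[of _ i] exI[of _ "length xs + j"]) (auto simp: nth_append)
qed

lemma precedes_total:
  assumes "a \<in> set xs" "b \<in> set xs" "a \<noteq> b"
  shows "precedes xs a b \<or> precedes xs b a"
proof -
  obtain i j where "i < length xs" "xs ! i = a" "j < length xs" "xs ! j = b"
    using assms(1,2) by (auto simp: in_set_conv_nth)
  moreover have "i \<noteq> j" using calculation assms(3) by auto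
  ultimately show ?thesis
    unfolding precedes_def by (metis linorder_neqE_nat)
qed

lemma precedes_asym: "distinct xs \<Longrightarrow> precedes xs a b \<Longrightarrow> \<not> precedes xs b a"
  unfolding precedes_def by (metis nth_eq_iff_index_eq order.asym order.strict_trans)

lemma precedes_append_iff:
  assumes "distinct (xs @ ys)" "b \<in> set xs"
  shows "precedes (xs @ ys) a b \<longleftrightarrow> precedes xs a b"
proof
  assume "precedes (xs @ ys) a b"
  then obtain i j where ij: "i < j" "j < length (xs @ ys)" "(xs @ ys) ! i = a" "(xs @ ys) ! j = b"
    unfolding precedes_def by blast
  obtain k where k: "k < length xs" "xs ! k = b"
    using assms(2) by (auto simp: in_set_conv_nth)
  then have "j = k"
    using ij assms(1) by (metis nth_append_left nth_eq_iff_index_eq length_append trans_less_add1)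
  then show "precedes xs a b"
    using ij k unfolding precedes_def by (metis nth_append_left order.strict_trans)
qed (rule precedes_append_left)

section \<open>Feasible event sequences\<close>

definition acceptable_pairs :: "('r, 'h) inst \<Rightarrow> ('r \<times> 'h) set" where
  "acceptable_pairs I = {(r, h). h \<in> set (rpref I r)}"

lemma acceptable_pairs_subset: "valid_inst I \<Longrightarrow> acceptable_pairs I \<subseteq> Rs I \<times> Hs I"
  unfolding valid_inst_def acceptable_pairs_def by fastforce

lemma finite_acceptable_pairs: "valid_inst I \<Longrightarrow> finite (acceptable_pairs I)"
  by (rule finite_subset[OF acceptable_pairs_subset]) (auto simp: valid_inst_def)

lemma props_simps [simp]:
  "props [] = {}" "props (\<sigma> @ [Prop r h]) = insert (r, h) (props \<sigma>)" "props (\<sigma> @ [Rej r h]) = props \<sigma>"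
  by (auto simp: props_def)

lemma rejs_simps [simp]:
  "rejs [] = {}" "rejs (\<sigma> @ [Rej r h]) = insert (r, h) (rejs \<sigma>)" "rejs (\<sigma> @ [Prop r h]) = rejs \<sigma>"
  by (auto simp: rejs_def)

lemma ousted_mem: "ousted I m M \<Longrightarrow> m \<in> M"
  unfolding ousted_def by (auto split: prod.splits)

lemma ousted_mono:
  assumes "ousted I m M" "M \<subseteq> M'"
  shows "ousted I m M'"
proof -
  obtain r h where m: "m = (r, h)" by (cases m)
  have sub: "res_h h M \<subseteq> res_h h M'" using assms(2) by (auto simp: res_h_def)
  have "card (set (hpref I h) \<inter> res_h h M) \<le> card (set (hpref I h) \<inter> res_h h M')"
    using sub by (intro card_mono) auto
  moreover have "card {r' \<in> res_h h M. precedes (hpref I h) r' r}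
      \<le> card {r' \<in> res_h h M'. precedes (hpref I h) r' r}"
    using sub by (intro card_mono finite_predecessors) auto
  ultimately show ?thesis using assms unfolding ousted_def m by auto
qed

lemma feasible_props_acceptable: "feasible I \<sigma> \<Longrightarrow> props \<sigma> \<subseteq> acceptable_pairs I"
  by (induction rule: feasible.induct) (auto simp: acceptable_pairs_def)

lemma feasible_rejs_props: "feasible I \<sigma> \<Longrightarrow> rejs \<sigma> \<subseteq> props \<sigma>"
  by (induction rule: feasible.induct) (auto dest: ousted_mem)

lemma feasible_rejs_ousted: "feasible I \<sigma> \<Longrightarrow> m \<in> rejs \<sigma> \<Longrightarrow> ousted I m (props \<sigma>)"
proof (induction rule: feasible.induct)
  case (feas_Prop \<sigma> r h)
  then have "ousted I m (props \<sigma>)" by simp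
  then show ?case by (rule ousted_mono) auto
qed auto

lemma feasible_precedes_rejected:
  "feasible I \<sigma> \<Longrightarrow> (r, h) \<in> props \<sigma> \<Longrightarrow> precedes (rpref I r) h' h \<Longrightarrow> (r, h') \<in> rejs \<sigma>"
  by (induction rule: feasible.induct) auto

lemma feasible_tents_unique:
  "feasible I \<sigma> \<Longrightarrow> (r, h1) \<in> tents \<sigma> \<Longrightarrow> (r, h2) \<in> tents \<sigma> \<Longrightarrow> h1 = h2"
proof (induction arbitrary: h1 h2 rule: feasible.induct)
  case (feas_Prop \<sigma> r' h)
  then show ?case using feasible_rejs_props[OF feas_Prop.hyps(1)] by (auto simp: tents_def res_def)
qed (auto simp: tents_def)

lemma feasible_distinct: "feasible I \<sigma> \<Longrightarrow> distinct \<sigma>"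
  by (induction rule: feasible.induct) (auto simp: props_def rejs_def)

lemma feasible_length_le:
  assumes feas: "feasible I \<sigma>" and fin: "finite (acceptable_pairs I)"
  shows "length \<sigma> \<le> 2 * card (acceptable_pairs I)"
proof -
  let ?A = "acceptable_pairs I"
  let ?E = "case_prod Prop ` ?A \<union> case_prod Rej ` ?A"
  have "set \<sigma> \<subseteq> ?E"
  proof
    fix e assume e: "e \<in> set \<sigma>"
    show "e \<in> ?E"
    proof (cases e)
      case (Prop r h)
      then have "(r, h) \<in> ?A" using e feasible_props_acceptable[OF feas] by (auto simp: props_def)
      then show ?thesis using Prop by (auto intro: image_eqI[where x = "(r, h)"])
    next
      case (Rej r h)
      then have "(r, h) \<in> ?A"
        using e feasible_props_acceptable[OF feas] feasible_rejs_props[OF feas] by (auto simp: rejs_def)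
      then show ?thesis using Rej by (auto intro: image_eqI[where x = "(r, h)"])
    qed
  qed
  then have "length \<sigma> \<le> card ?E"
    using distinct_card[OF feasible_distinct[OF feas]] fin by (metis card_mono finite_UnI finite_imageI)
  also have "\<dots> \<le> card (case_prod Prop ` ?A) + card (case_prod Rej ` ?A)"
    by (rule card_Un_le)
  also have "\<dots> \<le> 2 * card ?A"
    using card_image_le[OF fin, of "case_prod Prop"] card_image_le[OF fin, of "case_prod Rej"] by simp
  finally show ?thesis .
qed

lemma maximal_feasible_exists:
  assumes "finite (acceptable_pairs I)"
  shows "\<exists>\<tau>. maximal_feasible I \<tau>"
proof -
  let ?len = "\<lambda>n. \<exists>\<tau>. feasible I \<tau> \<and> length \<tau> = n"
  have "?len 0" using feasible.feas_Nil by auto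
  moreover have "\<forall>n. ?len n \<longrightarrow> n \<le> 2 * card (acceptable_pairs I)"
    using feasible_length_le[OF _ assms] by blast
  ultimately obtain n where "?len n" and greatest: "\<forall>m. ?len m \<longrightarrow> m \<le> n"
    using Nat.ex_has_greatest_nat[of ?len 0 "2 * card (acceptable_pairs I)"] by blast
  then obtain \<tau> where \<tau>: "feasible I \<tau>" "length \<tau> = n" by blast
  have "\<not> feasible I (\<tau> @ [e])" for e
  proof
    assume "feasible I (\<tau> @ [e])"
    then have "Suc n \<le> n" using greatest \<tau>(2) by (metis length_append_singleton)
    then show False by simp
  qed
  then show ?thesis using \<tau>(1) unfolding maximal_feasible_def by blast
qed

lemma maximal_feasible_some_max: "valid_inst I \<Longrightarrow> maximal_feasible I (some_max I)"
  unfolding some_max_def by (rule someI_ex[OF maximal_feasible_exists[OF finite_acceptable_pairs]])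

lemma maximal_feasible_rejects_ousted:
  "maximal_feasible I \<tau> \<Longrightarrow> ousted I (r, h) (props \<tau>) \<Longrightarrow> (r, h) \<in> rejs \<tau>"
  unfolding maximal_feasible_def by (metis feasible.feas_Rej)

lemma maximal_feasible_proposes:
  assumes max: "maximal_feasible I \<tau>" and h: "h \<in> set (rpref I r)"
    and before: "\<forall>h'. precedes (rpref I r) h' h \<longrightarrow> (r, h') \<in> rejs \<tau>"
  shows "(r, h) \<in> props \<tau>"
proof (rule ccontr)
  assume not_prop: "(r, h) \<notin> props \<tau>"
  have feas: "feasible I \<tau>" using max by (simp add: maximal_feasible_def)
  have "r \<notin> res (tents \<tau>)"
  proof
    assume "r \<in> res (tents \<tau>)"
    then obtain h' where h': "(r, h') \<in> props \<tau>" "(r, h') \<notin> rejs \<tau>"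
      by (auto simp: res_def tents_def)
    then have "h' \<in> set (rpref I r)" "h' \<noteq> h"
      using feasible_props_acceptable[OF feas] not_prop by (auto simp: acceptable_pairs_def)
    then consider "precedes (rpref I r) h h'" | "precedes (rpref I r) h' h"
      using precedes_total h by metis
    then show False
    proof cases
      case 1
      then show False
        using feasible_precedes_rejected[OF feas h'(1)] feasible_rejs_props[OF feas] not_prop by blast
    next
      case 2
      then show False using before h'(2) by blast
    qed
  qed
  then have "feasible I (\<tau> @ [Prop r h])"
    using feasible.feas_Prop[OF feas _ not_prop h before] by blast
  then show False using max by (simp add: maximal_feasible_def)
qed

lemma feasible_subset_maximal: "feasible I \<sigma> \<Longrightarrow> maximal_feasible I \<tau> \<Longrightarrow> set \<sigma> \<subseteq> set \<tau>"
proof (induction rule: feasible.induct)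
  case (feas_Prop \<sigma> r h)
  then have "rejs \<sigma> \<subseteq> rejs \<tau>" by (auto simp: rejs_def)
  then have "(r, h) \<in> props \<tau>"
    using maximal_feasible_proposes[OF feas_Prop.prems feas_Prop.hyps(4)] feas_Prop.hyps(5) by blast
  then show ?case using feas_Prop by (auto simp: props_def)
next
  case (feas_Rej \<sigma> r h)
  then have "props \<sigma> \<subseteq> props \<tau>" by (auto simp: props_def)
  then have "(r, h) \<in> rejs \<tau>"
    using maximal_feasible_rejects_ousted[OF feas_Rej.prems] ousted_mono feas_Rej.hyps(2) by blast
  then show ?case using feas_Rej by (auto simp: rejs_def)
qed simp

lemma rejs_maximal_feasible:
  assumes "maximal_feasible I \<tau>" "props \<tau> = acceptable_pairs I"
  shows "rejs \<tau> = {m. ousted I m (acceptable_pairs I)}"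
proof -
  have "m \<in> rejs \<tau> \<longleftrightarrow> ousted I m (props \<tau>)" for m
    using assms(1) maximal_feasible_rejects_ousted[OF assms(1)] feasible_rejs_ousted
    unfolding maximal_feasible_def by (cases m) blast
  then show ?thesis using assms(2) by auto
qed

section \<open>Resident-minimal instances and their extensions\<close>

lemma resident_minimal_iff: "resident_minimal I \<longleftrightarrow> propI I = acceptable_pairs I"
  by (simp add: resident_minimal_def acceptable_pairs_def)

lemma rejI_resident_minimal:
  "valid_inst I \<Longrightarrow> resident_minimal I \<Longrightarrow> rejI I = {m. ousted I m (acceptable_pairs I)}"
  unfolding resident_minimal_iff rejI_def propI_def
  by (rule rejs_maximal_feasible[OF maximal_feasible_some_max])

lemma tentI_resident_minimal: "resident_minimal I \<Longrightarrow> tentI I = acceptable_pairs I - rejI I"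
  by (simp add: resident_minimal_iff tentI_def tents_def propI_def rejI_def)

lemma pendI_unlisted: "pendI I = {(r, h) \<in> tentI I. r \<notin> set (hpref I h)}"
  by (simp add: pendI_def pends_def tentI_def)

lemma tentI_unique: "valid_inst I \<Longrightarrow> (r, h1) \<in> tentI I \<Longrightarrow> (r, h2) \<in> tentI I \<Longrightarrow> h1 = h2"
  unfolding tentI_def using feasible_tents_unique maximal_feasible_some_max maximal_feasible_def by metis

lemma rpref_resident_changeless:
  assumes "valid_inst I" "valid_inst J" "extension I J" "resident_changeless I J"
  shows "rpref J = rpref I"
proof
  fix r show "rpref J r = rpref I r"
    using assms unfolding valid_inst_def extension_def resident_changeless_def by (cases "r \<in> Rs I") auto
qed

lemma ousted_extension:
  assumes ext: "extension I J" and h: "h \<in> Hs I"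
    and distinct: "distinct (hpref J h)" and listed: "r \<in> set (hpref J h)"
    and ousted: "ousted I (r, h) M"
  shows "ousted J (r, h) M"
proof -
  let ?L = "hpref I h" and ?Mh = "res_h h M"
  obtain ys where L': "hpref J h = ?L @ ys" and q: "quota J h = quota I h"
    using ext h unfolding extension_def prefix_def by blast
  have full: "card (set ?L \<inter> ?Mh) \<ge> quota I h"
    and before: "r \<notin> set ?L \<or> card {r' \<in> ?Mh. precedes ?L r' r} \<ge> quota I h"
    using ousted unfolding ousted_def by auto
  have "card (set ?L \<inter> ?Mh) \<le> card (set (hpref J h) \<inter> ?Mh)"
    unfolding L' by (rule card_mono) auto
  moreover have "card {r' \<in> ?Mh. precedes (hpref J h) r' r} \<ge> quota I h"
  proof (cases "r \<in> set ?L")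
    case True
    have "card {r' \<in> ?Mh. precedes ?L r' r} \<le> card {r' \<in> ?Mh. precedes (hpref J h) r' r}"
      unfolding L' by (intro card_mono finite_predecessors) (auto intro: precedes_append_left)
    then show ?thesis using True before by simp
  next
    case False
    then have "r \<in> set ys" using listed L' by simp
    then have "card (set ?L \<inter> ?Mh) \<le> card {r' \<in> ?Mh. precedes (hpref J h) r' r}"
      unfolding L' by (intro card_mono finite_predecessors) (auto intro: precedes_append_across)
    then show ?thesis using full by simp
  qed
  ultimately show ?thesis
    using ousted full q listed unfolding ousted_def by auto
qed

locale complete_extension =
  fixes I J :: "('r, 'h) inst"
  assumes valid: "valid_inst I" and valid': "valid_inst J"
    and ext: "extension I J" and changeless: "resident_changeless I J"
    and complete: "hospital_complete J"
begin

lemma rpref_eq: "rpref J = rpref I"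
  using rpref_resident_changeless valid valid' ext changeless by blast

lemma acceptable_pairs_eq: "acceptable_pairs J = acceptable_pairs I"
  by (simp add: acceptable_pairs_def rpref_eq)

lemma feasible_extension: "feasible I \<sigma> \<Longrightarrow> feasible J \<sigma>"
proof (induction rule: feasible.induct)
  case (feas_Rej \<sigma> r h)
  have "(r, h) \<in> acceptable_pairs I"
    using feas_Rej.hyps(1,2) feasible_props_acceptable ousted_mem by blast
  then have "r \<in> Rs I" "h \<in> Hs I" using acceptable_pairs_subset[OF valid] by auto
  moreover have "distinct (hpref J h)" "set (hpref J h) = Rs J"
    using valid' complete \<open>h \<in> Hs I\<close> ext
    unfolding valid_inst_def hospital_complete_def extension_def by auto
  ultimately have "ousted J (r, h) (props \<sigma>)"
    using ousted_extension[OF ext _ _ _ feas_Rej.hyps(2)] ext by (simp add: extension_def)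
  then show ?case using feas_Rej by (intro feasible.feas_Rej)
qed (auto intro: feasible.intros simp: rpref_eq)

lemma set_some_max_extension: "set (some_max I) \<subseteq> set (some_max J)"
  using feasible_subset_maximal[OF feasible_extension maximal_feasible_some_max[OF valid']]
    maximal_feasible_some_max[OF valid] by (simp add: maximal_feasible_def)

lemma rejI_extension: "rejI I \<subseteq> rejI J"
  using set_some_max_extension by (auto simp: rejI_def rejs_def)

lemma resident_minimal_extension:
  assumes "resident_minimal I"
  shows "resident_minimal J"
proof -
  have "propI I \<subseteq> propI J" using set_some_max_extension by (auto simp: propI_def props_def)
  moreover have "propI J \<subseteq> acceptable_pairs J"
    unfolding propI_def
    using feasible_props_acceptable maximal_feasible_some_max[OF valid'] maximal_feasible_def by blast
  ultimately show ?thesis using assms acceptable_pairs_eq by (simp add: resident_minimal_iff)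
qed

end

section \<open>Completing the hospital lists\<close>

definition list_of_set :: "'a set \<Rightarrow> 'a list" where
  "list_of_set S = (SOME xs. distinct xs \<and> set xs = S)"

lemma list_of_set: "finite S \<Longrightarrow> distinct (list_of_set S) \<and> set (list_of_set S) = S"
  unfolding list_of_set_def by (rule someI_ex) (metis finite_distinct_list)

locale general_prescription =
  fixes I :: "('r, 'h) inst" and P X :: "('r \<times> 'h) set"
  assumes valid: "valid_inst I" and presc: "gen_prescription I P X"
begin

lemma resident_minimal_I: "resident_minimal I"
  using presc by (simp add: gen_prescription_def)

lemma tentI_eq: "tentI I = acceptable_pairs I - rejI I"
  using tentI_resident_minimal[OF resident_minimal_I] .

lemma prescribed_subset: "P \<subseteq> Rs I \<times> Hs I" "P \<inter> acceptable_pairs I = {}" "X \<subseteq> tentI I"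
  using presc resident_minimal_I by (auto simp: gen_prescription_def presc_base_def resident_minimal_iff)

lemma prescribed_unique: "(r, h) \<in> P \<Longrightarrow> (r, h') \<in> P \<Longrightarrow> h = h'"
  using presc by (auto simp: gen_prescription_def presc_base_def)

lemma res_prescribed_tentI: "res P \<inter> res (tentI I) \<subseteq> res X"
  using presc by (simp add: gen_prescription_def presc_base_def)

definition assigned :: "'h \<Rightarrow> 'r set" where
  "assigned h = res_h h (P \<union> (tentI I - X))"

lemma card_assigned:
  assumes "h \<in> Hs I"
  shows "card (assigned h) \<le> quota I h" and "res_h h X \<noteq> {} \<Longrightarrow> card (assigned h) = quota I h"
  using presc assms by (auto simp: gen_prescription_def presc_base_def assigned_def)

lemma precedes_listed_released:
  assumes "h \<in> Hs I" "a \<in> res_h h (P \<union> ((tentI I - pendI I) - X))" "b \<in> res_h h (X - pendI I)"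
  shows "precedes (hpref I h) a b"
  using presc assms by (auto simp: gen_prescription_def)

lemma pending_released:
  "h \<in> Hs I \<Longrightarrow> res_h h (X - pendI I) \<noteq> {} \<Longrightarrow> res_h h (pendI I) \<subseteq> res_h h X"
  using presc by (auto simp: gen_prescription_def)

lemma assigned_subset: "assigned h \<subseteq> Rs I"
  using prescribed_subset(1) acceptable_pairs_subset[OF valid] tentI_eq
  by (auto simp: assigned_def res_h_def)

lemma finite_assigned: "finite (assigned h)"
  by (rule finite_subset[OF assigned_subset]) (use valid in \<open>simp add: valid_inst_def\<close>)

definition completed_pref :: "'h \<Rightarrow> 'r list" where
  "completed_pref h = (if h \<in> Hs I
     then hpref I h @ list_of_set (assigned h - set (hpref I h))
                    @ list_of_set (Rs I - set (hpref I h) - assigned h)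
     else [])"

definition completion :: "('r, 'h) inst" where
  "completion = I\<lparr>hpref := completed_pref\<rparr>"

lemma completion_simps [simp]:
  "Rs completion = Rs I" "Hs completion = Hs I" "quota completion = quota I"
  "rpref completion = rpref I" "hpref completion = completed_pref"
  by (simp_all add: completion_def)

lemma completed_pref_split:
  assumes "h \<in> Hs I"
  obtains ys zs where "completed_pref h = hpref I h @ ys @ zs"
    "set ys = assigned h - set (hpref I h)" "set zs = Rs I - set (hpref I h) - assigned h"
    "distinct (completed_pref h)" "set (completed_pref h) = Rs I"
proof -
  let ?L = "hpref I h"
  let ?ys = "list_of_set (assigned h - set ?L)" and ?zs = "list_of_set (Rs I - set ?L - assigned h)"
  have fin: "finite (Rs I)" and L: "distinct ?L" "set ?L \<subseteq> Rs I"
    using valid assms unfolding valid_inst_def by auto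
  have ys: "distinct ?ys" "set ?ys = assigned h - set ?L"
    using list_of_set finite_subset[OF _ fin] assigned_subset by (metis Diff_subset order_trans)+
  have zs: "distinct ?zs" "set ?zs = Rs I - set ?L - assigned h"
    using list_of_set fin by (metis finite_Diff)+
  have split: "completed_pref h = ?L @ ?ys @ ?zs"
    using assms by (simp add: completed_pref_def)
  show ?thesis
  proof (rule that[OF split ys(2) zs(2)])
    show "distinct (completed_pref h)" unfolding split using L(1) ys zs by auto
    show "set (completed_pref h) = Rs I" unfolding split using L(2) ys(2) zs(2) assigned_subset[of h] by auto
  qed
qed

lemma completion_valid: "valid_inst completion"
proof -
  have "distinct (completed_pref h) \<and> set (completed_pref h) \<subseteq> Rs I" if "h \<in> Hs I" for h
    by (rule completed_pref_split[OF that]) auto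
  then show ?thesis using valid unfolding valid_inst_def by (simp add: completed_pref_def)
qed

sublocale complete_extension I completion
proof
  show "extension I completion"
    unfolding extension_def by (auto simp: prefix_def elim!: completed_pref_split)
  show "hospital_complete completion"
    unfolding hospital_complete_def by (auto elim: completed_pref_split)
qed (simp_all add: valid completion_valid resident_changeless_def)

lemma resident_minimal_completion: "resident_minimal completion"
  using resident_minimal_extension[OF resident_minimal_I] .

lemma propI_completion: "propI completion = acceptable_pairs I"
  using resident_minimal_completion acceptable_pairs_eq by (simp add: resident_minimal_iff)

lemma rejI_completion: "rejI completion = {m. ousted completion m (acceptable_pairs I)}"
  using rejI_resident_minimal[OF completion_valid resident_minimal_completion] acceptable_pairs_eq
  by simp

lemma tentI_completion: "tentI completion = acceptable_pairs I - rejI completion"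
  using tentI_resident_minimal[OF resident_minimal_completion] acceptable_pairs_eq by simp

lemma precedes_assigned_released:
  assumes h: "h \<in> Hs I" and a: "a \<in> assigned h" and b: "(b, h) \<in> X"
  shows "precedes (completed_pref h) a b"
proof -
  obtain ys zs where split: "completed_pref h = hpref I h @ ys @ zs"
    and ys: "set ys = assigned h - set (hpref I h)" and zs: "set zs = Rs I - set (hpref I h) - assigned h"
    using completed_pref_split[OF h] by metis
  show ?thesis
  proof (cases "b \<in> set (hpref I h)")
    case True
    then have b_listed: "b \<in> res_h h (X - pendI I)" using b by (auto simp: pendI_unlisted res_h_def)
    then have "res_h h (pendI I) \<subseteq> res_h h X" using pending_released h by blast
    then have "a \<in> res_h h (P \<union> ((tentI I - pendI I) - X))" using a by (auto simp: assigned_def res_h_def)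
    then have "precedes (hpref I h) a b" using precedes_listed_released h b_listed by blast
    then show ?thesis unfolding split by (rule precedes_append_left)
  next
    case False
    have "(b, h) \<in> acceptable_pairs I" using b prescribed_subset(3) tentI_eq by auto
    then have "b \<in> Rs I" "b \<notin> assigned h"
      using acceptable_pairs_subset[OF valid] prescribed_subset(2) b by (auto simp: assigned_def res_h_def)
    then have "b \<in> set zs" using False zs by auto
    moreover have "a \<in> set (hpref I h @ ys)" using a ys by auto
    ultimately show ?thesis unfolding split using precedes_append_across[of a "hpref I h @ ys" b zs] by simp
  qed
qed

lemma assigned_not_rejected:
  assumes h: "h \<in> Hs I" and released: "res_h h X \<noteq> {}" and r: "(r, h) \<in> tentI I - X"
  shows "(r, h) \<notin> rejI completion"
proof
  let ?A = "acceptable_pairs I" and ?L = "hpref I h" and ?L' = "completed_pref h"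
  let ?before = "\<lambda>xs. {r' \<in> res_h h ?A. precedes xs r' r}"
  assume "(r, h) \<in> rejI completion"
  then have ousted: "ousted completion (r, h) ?A" by (simp add: rejI_completion)
  have rA: "(r, h) \<in> ?A" "(r, h) \<notin> rejI I" using r tentI_eq by auto
  obtain ys zs where split: "?L' = ?L @ ys @ zs" and distinct: "distinct ?L'"
    and listed: "set ?L' = Rs I"
    using completed_pref_split[OF h] by metis
  have "r \<in> Rs I" using rA(1) acceptable_pairs_subset[OF valid] by auto
  then have many: "card (?before ?L') \<ge> quota I h"
    using ousted listed by (auto simp: ousted_def)
  show False
  proof (cases "card (set ?L \<inter> res_h h ?A) \<ge> quota I h")
    case True
    then have "r \<in> set ?L" and few: "card (?before ?L) < quota I h"
      using rA rejI_resident_minimal[OF valid resident_minimal_I] by (auto simp: ousted_def)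
    moreover have "?before ?L' = ?before ?L"
      using precedes_append_iff[of ?L "ys @ zs" r] distinct split \<open>r \<in> set ?L\<close> by auto
    ultimately show False using many by simp
  next
    case False
    \<comment> \<open>too few listed applicants for anyone at h to be ousted in I\<close>
    then have "(r', h) \<notin> rejI I" for r'
      using rejI_resident_minimal[OF valid resident_minimal_I] by (auto simp: ousted_def)
    then have tent_h: "res_h h ?A \<subseteq> res_h h (tentI I)" using tentI_eq by (auto simp: res_h_def)
    have "?before ?L' \<subseteq> assigned h - {r}"
    proof
      fix r' assume r': "r' \<in> ?before ?L'"
      then have "\<not> precedes ?L' r r'" "r' \<noteq> r" using precedes_asym[OF distinct] by auto
      then have "(r', h) \<notin> X"
        using precedes_assigned_released[OF h, of r r'] r by (auto simp: assigned_def res_h_def)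
      then show "r' \<in> assigned h - {r}"
        using r' tent_h \<open>r' \<noteq> r\<close> by (auto simp: assigned_def res_h_def)
    qed
    then have "card (?before ?L') \<le> card (assigned h - {r})"
      using finite_assigned by (intro card_mono) auto
    also have "\<dots> < card (assigned h)"
      using r finite_assigned by (intro psubset_card_mono) (auto simp: assigned_def res_h_def)
    also have "\<dots> = quota I h" using card_assigned(2)[OF h released] .
    finally show False using many by simp
  qed
qed

lemma tentI_completion_released:
  "tentI completion - (X - rejI completion) = (tentI I - X) - rejI completion"
  using tentI_eq tentI_completion rejI_extension by auto

lemma completion_presc_base: "presc_base completion P (X - rejI completion)"
proof -
  let ?Y = "X - rejI completion"
  let ?assigned' = "\<lambda>h. res_h h (P \<union> (tentI completion - ?Y))"
  have assigned': "?assigned' h \<subseteq> assigned h" for h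
    using tentI_completion_released by (auto simp: assigned_def res_h_def)
  have quota: "card (?assigned' h) \<le> quota I h \<and> (res_h h ?Y \<noteq> {} \<longrightarrow> card (?assigned' h) = quota I h)"
    if h: "h \<in> Hs I" for h
  proof (intro conjI impI)
    have "card (?assigned' h) \<le> card (assigned h)" by (rule card_mono[OF finite_assigned assigned'])
    then show "card (?assigned' h) \<le> quota I h" using card_assigned(1)[OF h] by linarith
  next
    assume "res_h h ?Y \<noteq> {}"
    then have released: "res_h h X \<noteq> {}" by (auto simp: res_h_def)
    then have "?assigned' h = assigned h"
      using assigned' assigned_not_rejected[OF h] tentI_completion_released
      by (auto simp: assigned_def res_h_def)
    then show "card (?assigned' h) = quota I h" using card_assigned(2)[OF h released] by simp
  qed
  have resP: "res P \<inter> res (tentI completion) \<subseteq> res ?Y"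
  proof
    fix r assume "r \<in> res P \<inter> res (tentI completion)"
    then obtain h where P: "r \<in> res P" and "(r, h) \<in> tentI completion" by (auto simp: res_def)
    then have rh: "(r, h) \<in> tentI I" "(r, h) \<notin> rejI completion"
      using tentI_completion tentI_eq rejI_extension by auto
    then obtain h' where "(r, h') \<in> X" using res_prescribed_tentI P by (auto simp: res_def)
    moreover from this have "h' = h" using tentI_unique[OF valid rh(1)] prescribed_subset(3) by auto
    ultimately show "r \<in> res ?Y" using rh(2) by (auto simp: res_def)
  qed
  show ?thesis
    unfolding presc_base_def
    using prescribed_subset prescribed_unique resP quota propI_completion tentI_completion tentI_eq
      acceptable_pairs_subset[OF valid]
    by auto
qed

lemma completion_prescription: "prescription completion P (X - rejI completion)"
  unfolding prescription_def
proof (intro conjI ballI)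
  fix h a b
  assume h: "h \<in> Hs completion"
    and a: "a \<in> res_h h (P \<union> (tentI completion - (X - rejI completion)))"
    and b: "b \<in> res_h h (X - rejI completion)"
  have "a \<in> assigned h" using a tentI_completion_released by (auto simp: assigned_def res_h_def)
  moreover have "(b, h) \<in> X" using b by (simp add: res_h_def)
  ultimately show "precedes (hpref completion h) a b"
    using precedes_assigned_released h by simp
qed (use resident_minimal_completion complete completion_presc_base in auto)

end

theorem lemma4:
  fixes I :: "('r, 'h) inst" and P X :: "('r \<times> 'h) set"
  assumes "valid_inst I"
    and "resident_minimal I"
    and "gen_prescription I P X"
  shows "\<exists>I'. valid_inst I' \<and> extension I I' \<and> resident_changeless I I'
           \<and> hospital_complete I' \<and> prescription I' P (X - rejI I')"
proof -
  interpret general_prescription I P X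
    using assms(1,3) by unfold_locales
  show ?thesis
    using completion_valid ext changeless complete completion_prescription by blast
qed

end
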